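(* Let $E_B<0$, $\mu>0$, $\tau>-\mu$, and set $\tilde\tau:=\tau/|E_B|$. Then for all $L>0$, $$\Bigl|G_\mu(\tau)-\frac1{4\pi}\log(\tilde\mu+\tilde\tau)\Bigr|\le\frac{K(\tilde\tau,\tilde\mu,\tilde L)}{\tilde L},$$ where $$K(\tilde\tau,\tilde\mu,\tilde L):=1+\frac3{\tilde L}+\frac1{\sqrt{\tilde\mu+\min\{\tilde\tau,1\}}}+\Bigl(\frac{4\sqrt{\tilde\mu}}{\pi}+\frac6{\tilde L}\Bigr)\frac1{\tilde\mu+\min\{\tilde\tau,1\}}.$$
   Context: Let $L>0$ and $\Lambda_L:=\frac{2\pi}{L}\mathbb Z^2$; sums over $k$ run over $\Lambda_L$. Fix $E_B<0$ and $\mu>0$, and set $\tilde\mu:=\mu/|E_B|$, $\tilde L:=L\sqrt{|E_B|}$. For $\tau>-\mu$ let $G_\mu(\tau):=L^{-2}\sum_k\bigl(\frac{1}{k^2-E_B}-\frac{\chi_{(\mu,\infty)}(k^2)}{k^2+\tau}\bigr)$. *)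

theory Defs
  imports "HOL-Analysis.Analysis"
begin

text \<open>Squared length of the lattice vector k = (2 pi / L)(m,n) in the dual lattice Lambda_L.\<close>
definition lattice_sq :: "real \<Rightarrow> int \<times> int \<Rightarrow> real" where
  "lattice_sq L p = (2 * pi / L)^2 * (real_of_int (fst p)^2 + real_of_int (snd p)^2)"

definition G_mu :: "real \<Rightarrow> real \<Rightarrow> real \<Rightarrow> real \<Rightarrow> real" where
  "G_mu L E_B \<mu> \<tau> = (1 / L^2) *
     (\<Sum>\<^sub>\<infinity>p\<in>(UNIV :: (int \<times> int) set).
        1 / (lattice_sq L p - E_B) - (if \<mu> < lattice_sq L p then 1 / (lattice_sq L p + \<tau>) else 0))"

definition K_const :: "real \<Rightarrow> real \<Rightarrow> real \<Rightarrow> real" where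
  "K_const t m l = 1 + 3 / l + 1 / sqrt (m + min t 1)
     + (4 * sqrt m / pi + 6 / l) * (1 / (m + min t 1))"

end

theory Submission
  imports Defs "HOL-Real_Asymp.Real_Asymp"
begin

text \<open>
  Rescaling \<open>k \<mapsto> k / sqrt \<bar>E_B\<bar>\<close> reduces the claim to \<open>E_B = -1\<close>. Let \<open>N(s)\<close> be the
  number of lattice vectors with \<open>k\<^sup>2 \<le> s\<close>; counting integer points column by column and
  comparing with the area of a quarter disc gives
  \<open>\<bar>N(s) - L\<^sup>2 s / (4 pi)\<bar> \<le> (2 L / pi) sqrt s + 1\<close>.
  Summation by parts turns the sums of \<open>1/(k\<^sup>2 + 1)\<close> over \<open>k\<^sup>2 \<le> R\<close> and of
  \<open>1/(k\<^sup>2 + \<tau>)\<close> over \<open>\<mu> < k\<^sup>2 \<le> R\<close> into \<open>L\<^sup>2/(4 pi)\<close> times logarithms, plus boundary terms and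
  integrals of the counting error against \<open>(s + c)\<^sup>-\<^sup>2\<close>; the latter are bounded with an
  explicit arctangent primitive. As \<open>R \<rightarrow> \<infinity>\<close> the logarithms combine to \<open>log (\<mu> + \<tau>)\<close> and
  the boundary terms vanish, while the same counting estimate shows that the summands,
  which are \<open>O((k\<^sup>2 + 1)\<^sup>-\<^sup>2)\<close>, are absolutely summable, so the partial sums over balls converge
  to \<open>G_mu\<close>.
\<close>

section \<open>Integer points in a disc\<close>

definition int_disc :: "real \<Rightarrow> (int \<times> int) set" where
  "int_disc R = {p. real_of_int (fst p)^2 + real_of_int (snd p)^2 \<le> R}"

lemma int_square_le_iff_interval:
  assumes "X \<ge> 0"
  shows "{n::int. real_of_int n ^ 2 \<le> X} = {-\<lfloor>sqrt X\<rfloor>..\<lfloor>sqrt X\<rfloor>}"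
proof -
  have "real_of_int n ^ 2 \<le> X \<longleftrightarrow> \<bar>real_of_int n\<bar> \<le> sqrt X" for n
    using real_le_rsqrt[of "\<bar>real_of_int n\<bar>" X] sqrt_ge_absD[of "real_of_int n" X] by auto
  then have "real_of_int n ^ 2 \<le> X \<longleftrightarrow> \<bar>n\<bar> \<le> \<lfloor>sqrt X\<rfloor>" for n
    by (simp only: le_floor_iff of_int_abs)
  then show ?thesis by (simp only: set_eq_iff mem_Collect_eq atLeastAtMost_iff) arith
qed

lemma card_int_square_le:
  assumes "X \<ge> 0"
  shows "real (card {n::int. real_of_int n ^ 2 \<le> X}) = 2 * real_of_int \<lfloor>sqrt X\<rfloor> + 1"
proof -
  have "\<lfloor>sqrt X\<rfloor> \<ge> 0" using assms by simp
  then show ?thesis unfolding int_square_le_iff_interval[OF assms] by simp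
qed

lemma int_disc_subset_square:
  "int_disc R \<subseteq> {-\<lfloor>sqrt R\<rfloor>..\<lfloor>sqrt R\<rfloor>} \<times> {-\<lfloor>sqrt R\<rfloor>..\<lfloor>sqrt R\<rfloor>}"
proof
  fix p assume "p \<in> int_disc R"
  then have "real_of_int (fst p)^2 + real_of_int (snd p)^2 \<le> R" by (simp add: int_disc_def)
  then have "real_of_int (fst p)^2 \<le> R" "real_of_int (snd p)^2 \<le> R"
    using zero_le_power2[of "real_of_int (fst p)"] zero_le_power2[of "real_of_int (snd p)"]
    by linarith+
  moreover from this have "R \<ge> 0" by (meson order_trans zero_le_power2)
  ultimately show "p \<in> {-\<lfloor>sqrt R\<rfloor>..\<lfloor>sqrt R\<rfloor>} \<times> {-\<lfloor>sqrt R\<rfloor>..\<lfloor>sqrt R\<rfloor>}"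
    using int_square_le_iff_interval[of R] by (simp add: mem_Times_iff set_eq_iff)
qed

lemma finite_int_disc: "finite (int_disc R)"
  by (rule finite_subset[OF int_disc_subset_square]) simp

lemma card_int_disc_columns:
  assumes "R \<ge> 0"
  shows "real (card (int_disc R))
    = (\<Sum>m\<in>{-\<lfloor>sqrt R\<rfloor>..\<lfloor>sqrt R\<rfloor>}. 2 * real_of_int \<lfloor>sqrt (R - real_of_int m ^ 2)\<rfloor> + 1)"
proof -
  let ?k = "\<lfloor>sqrt R\<rfloor>"
  let ?column = "\<lambda>m. {n::int. real_of_int n ^ 2 \<le> R - real_of_int m ^ 2}"
  have column_nonneg: "R - real_of_int m ^ 2 \<ge> 0" if "m \<in> {-?k..?k}" for m
    using that int_square_le_iff_interval[OF assms] by (simp add: set_eq_iff)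
  have "int_disc R = Sigma {-?k..?k} ?column"
    using int_disc_subset_square[of R] unfolding int_disc_def by (auto simp: algebra_simps)
  then have "real (card (int_disc R)) = (\<Sum>m\<in>{-?k..?k}. real (card (?column m)))"
    using column_nonneg by (simp add: int_square_le_iff_interval)
  also have "\<dots> = (\<Sum>m\<in>{-?k..?k}. 2 * real_of_int \<lfloor>sqrt (R - real_of_int m ^ 2)\<rfloor> + 1)"
    using column_nonneg by (intro sum.cong refl card_int_square_le)
  finally show ?thesis .
qed

lemma sum_symmetric_int_interval:
  "(\<Sum>m\<in>{-int n..int n}. g m) = g 0 + (\<Sum>i\<in>{1..n}. g (int i) + g (- int i))"
proof (induction n)
  case 0 then show ?case by simp
next
  case (Suc n)
  have "{-int (Suc n)..int (Suc n)} = insert (int n + 1) (insert (-(int n + 1)) {-int n..int n})"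
    by auto
  then show ?case using Suc by (simp add: algebra_simps)
qed

lemma quarter_disc_has_integral:
  fixes r :: real
  assumes "r > 0"
  shows "((\<lambda>x. sqrt (r^2 - x^2)) has_integral (pi * r^2 / 4)) {0..r}"
proof -
  define F where "F x = (x * sqrt (r^2 - x^2) + r^2 * arcsin (x / r)) / 2" for x
  have "(F has_real_derivative sqrt (r^2 - x^2)) (at x)" if x: "x \<in> {0<..<r}" for x
  proof -
    have pos: "r^2 - x^2 > 0" using x assms by (simp add: power_strict_mono)
    have xr: "-1 < x / r" "x / r < 1" using x assms by (auto simp: divide_simps)
    have root: "sqrt (1 - (x/r)^2) = sqrt (r^2 - x^2) / r"
      using assms by (simp add: field_simps real_sqrt_divide)
    show ?thesis
      unfolding F_def using pos xr assms
      by (auto intro!: derivative_eq_intros simp: root) (simp add: field_simps power2_eq_square)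
  qed
  moreover have "continuous_on {0..r} F"
    unfolding F_def using assms by (intro continuous_intros) (auto simp: divide_simps)
  ultimately have "((\<lambda>x. sqrt (r^2 - x^2)) has_integral (F r - F 0)) {0..r}"
    using assms by (intro fundamental_theorem_of_calculus_interior)
      (auto simp: has_real_derivative_iff_has_vector_derivative)
  then show ?thesis using assms by (simp add: F_def mult_ac)
qed

lemma integral_antitone_bounds:
  fixes h :: "real \<Rightarrow> real"
  assumes "a \<le> b" "continuous_on {a..b} h" "antimono_on {a..b} h"
  shows "(b - a) * h b \<le> integral {a..b} h" "integral {a..b} h \<le> (b - a) * h a"
proof -
  have int: "h integrable_on {a..b}" using assms(2) by (rule integrable_continuous_interval)
  have bounds: "h b \<le> h x" "h x \<le> h a" if "x \<in> {a..b}" for x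
    using that assms(1) monotone_onD[OF assms(3)] by auto
  have "integral {a..b} (\<lambda>_. h b) \<le> integral {a..b} h"
    by (rule integral_le) (use int bounds in auto)
  moreover have "integral {a..b} h \<le> integral {a..b} (\<lambda>_. h a)"
    by (rule integral_le) (use int bounds in auto)
  ultimately show "(b - a) * h b \<le> integral {a..b} h" "integral {a..b} h \<le> (b - a) * h a"
    using assms(1) by (simp_all add: mult.commute)
qed

lemma antitone_unit_steps_integral_bounds:
  fixes h :: "real \<Rightarrow> real" and n :: nat
  assumes "continuous_on {0..real n} h" and "antimono_on {0..real n} h"
  shows "(\<Sum>i=1..n. h (real i)) \<le> integral {0..real n} h \<and> integral {0..real n} h \<le> (\<Sum>i<n. h (real i))"
  using assms
proof (induction n)
  case (Suc n)
  have cont_sub: "continuous_on {a..b} h" and anti_sub: "antimono_on {a..b} h"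
    if "0 \<le> a" "b \<le> real (Suc n)" for a b
    using continuous_on_subset[OF Suc.prems(1)] monotone_on_subset[OF Suc.prems(2)] that by auto
  have "integral {0..real (Suc n)} h = integral {0..real n} h + integral {real n..real (Suc n)} h"
    using cont_sub by (intro Henstock_Kurzweil_Integration.integral_combine[symmetric]
      integrable_continuous_interval) auto
  moreover have "h (real (Suc n)) \<le> integral {real n..real (Suc n)} h"
    "integral {real n..real (Suc n)} h \<le> h (real n)"
    using integral_antitone_bounds[of "real n" "real (Suc n)" h] cont_sub anti_sub by auto
  moreover have "(\<Sum>i=1..n. h (real i)) \<le> integral {0..real n} h"
    "integral {0..real n} h \<le> (\<Sum>i<n. h (real i))"
    using Suc.IH cont_sub anti_sub by auto
  ultimately show ?case by simp
qed simp

lemma antitone_sum_integral_bounds: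
  fixes h :: "real \<Rightarrow> real" and r :: real
  defines "k \<equiv> nat \<lfloor>r\<rfloor>"
  assumes r: "r \<ge> 0" and cont: "continuous_on {0..r} h" and anti: "antimono_on {0..r} h"
    and nonneg: "h r \<ge> 0"
  shows "(\<Sum>i=1..k. h (real i)) \<le> integral {0..r} h"
    and "integral {0..r} h \<le> h 0 + (\<Sum>i=1..k. h (real i))"
proof -
  have kr: "real k \<le> r" "r < real k + 1" unfolding k_def using r by linarith+
  have cont_sub: "continuous_on {a..b} h" and anti_sub: "antimono_on {a..b} h"
    if "0 \<le> a" "b \<le> r" for a b
    using continuous_on_subset[OF cont] monotone_on_subset[OF anti] that by auto
  have split: "integral {0..r} h = integral {0..real k} h + integral {real k..r} h"
    using cont_sub kr by (intro Henstock_Kurzweil_Integration.integral_combine[symmetric]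
      integrable_continuous_interval) auto
  have "(r - real k) * h r \<le> integral {real k..r} h" "integral {real k..r} h \<le> (r - real k) * h (real k)"
    using integral_antitone_bounds[of "real k" r h] cont_sub anti_sub kr by auto
  moreover have "h r \<le> h (real k)"
    using kr r monotone_onD[OF anti] by auto
  moreover have "0 \<le> (r - real k) * h r" "(r - real k) * h (real k) \<le> h (real k)"
    using kr nonneg \<open>h r \<le> h (real k)\<close> mult_left_le_one_le[of "h (real k)" "r - real k"] by auto
  ultimately have tail: "0 \<le> integral {real k..r} h" "integral {real k..r} h \<le> h (real k)"
    by linarith+
  have "(\<Sum>i<k. h (real i)) + h (real k) = (\<Sum>i\<le>k. h (real i))"
    by (simp add: lessThan_Suc_atMost[symmetric])
  also have "\<dots> = h 0 + (\<Sum>i=1..k. h (real i))"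
    by (simp add: atMost_atLeast0 sum.atLeast_Suc_atMost[of 0 k])
  finally show "(\<Sum>i=1..k. h (real i)) \<le> integral {0..r} h"
    and "integral {0..r} h \<le> h 0 + (\<Sum>i=1..k. h (real i))"
    using antitone_unit_steps_integral_bounds[of k h] cont_sub anti_sub kr split tail
    by (auto intro: order_trans)
qed

lemma card_int_disc_column_heights:
  fixes R :: real
  assumes "R \<ge> 0"
  shows "\<bar>real (card (int_disc R))
      - 2 * (\<Sum>m\<in>{-\<lfloor>sqrt R\<rfloor>..\<lfloor>sqrt R\<rfloor>}. sqrt (R - real_of_int m ^ 2))\<bar>
    \<le> 2 * real_of_int \<lfloor>sqrt R\<rfloor> + 1"
proof -
  let ?k = "\<lfloor>sqrt R\<rfloor>" and ?h = "\<lambda>m::int. sqrt (R - real_of_int m ^ 2)"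
  have "\<bar>real (card (int_disc R)) - 2 * (\<Sum>m\<in>{-?k..?k}. ?h m)\<bar>
      = \<bar>\<Sum>m\<in>{-?k..?k}. 2 * real_of_int \<lfloor>?h m\<rfloor> + 1 - 2 * ?h m\<bar>"
    unfolding card_int_disc_columns[OF assms] by (simp add: sum_subtractf sum_distrib_left)
  also have "\<dots> \<le> (\<Sum>m\<in>{-?k..?k}. \<bar>2 * real_of_int \<lfloor>?h m\<rfloor> + 1 - 2 * ?h m\<bar>)"
    by (rule sum_abs)
  also have "\<dots> \<le> (\<Sum>m\<in>{-?k..?k}. 1)"
  proof (rule sum_mono)
    fix m :: int
    show "\<bar>2 * real_of_int \<lfloor>?h m\<rfloor> + 1 - 2 * ?h m\<bar> \<le> 1"
      using of_int_floor_le[of "?h m"] real_of_int_floor_add_one_gt[of "?h m"] by linarith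
  qed
  also have "\<dots> = 2 * real_of_int ?k + 1"
    using assms by simp
  finally show ?thesis .
qed

lemma gauss_circle_bound:
  fixes R :: real
  assumes R: "R \<ge> 0"
  shows "\<bar>real (card (int_disc R)) - pi * R\<bar> \<le> 4 * sqrt R + 1"
proof -
  define r where "r = sqrt R"
  define k where "k = nat \<lfloor>r\<rfloor>"
  define hh where "hh x = sqrt (R - x^2)" for x :: real
  define S where "S = (\<Sum>i=1..k. hh (real i))"
  have r: "r \<ge> 0" "r^2 = R" unfolding r_def using R by simp_all
  have kr: "real k \<le> r" "\<lfloor>sqrt R\<rfloor> = int k" unfolding k_def r_def using r R by simp_all
  have hh_anti: "antimono_on {0..r} hh"
    by (intro monotone_onI) (auto simp: hh_def power_mono)
  have "integral {0..r} hh = pi * R / 4"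
  proof (cases "r = 0")
    case False
    with r have "r > 0" by simp
    from quarter_disc_has_integral[OF this] show ?thesis
      unfolding hh_def r(2) by (simp add: integral_unique)
  qed (use r in simp)
  moreover have "continuous_on {0..r} hh" unfolding hh_def by (intro continuous_intros)
  moreover have "hh 0 = r" "hh r = 0" unfolding hh_def r_def using R by simp_all
  ultimately have S_bounds: "S \<le> pi * R / 4" "pi * R / 4 \<le> r + S"
    using antitone_sum_integral_bounds[of r hh] r hh_anti unfolding S_def k_def by auto
  have "(\<Sum>m\<in>{-int k..int k}. hh (real_of_int m)) = r + 2 * S"
  proof -
    have "hh (- x) = hh x" for x unfolding hh_def by simp
    then show ?thesis
      unfolding sum_symmetric_int_interval S_def using \<open>hh 0 = r\<close> by (simp add: sum_distrib_left)
  qed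
  then have "\<bar>real (card (int_disc R)) - 2 * (r + 2 * S)\<bar> \<le> 2 * real k + 1"
    using card_int_disc_column_heights[OF R] unfolding kr(2) hh_def by simp
  then show ?thesis using S_bounds kr unfolding r_def by (simp add: abs_le_iff)
qed

section \<open>Summation by parts against a counting function\<close>

definition sqrt_square_primitive :: "real \<Rightarrow> real \<Rightarrow> real \<Rightarrow> real \<Rightarrow> real \<Rightarrow> real" where
  "sqrt_square_primitive \<alpha> \<gamma> a c s =
     \<alpha> * (arctan (sqrt (s - a) / sqrt c) / sqrt c - sqrt (s - a) / (s - a + c)) - \<gamma> / (s - a + c)"

lemma sqrt_square_primitive_deriv:
  assumes c: "c > 0" and s: "s > a"
  shows "(sqrt_square_primitive \<alpha> \<gamma> a c has_real_derivative (\<alpha> * sqrt (s - a) + \<gamma>) / (s - a + c)^2) (at s)"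
proof -
  define u where "u = sqrt (s - a)"
  define w where "w = sqrt c"
  define Q where "Q = u^2 + w^2"
  have nonzero: "u \<noteq> 0" "w \<noteq> 0" "Q \<noteq> 0"
    using c s by (simp_all add: u_def w_def Q_def add_pos_pos)
  have eqs: "sqrt (s - a) = u" "sqrt c = w" "s - a = u^2" "c = w^2" "\<bar>w\<bar> = w" "u^2 + w^2 = Q"
    using c s by (simp_all add: u_def w_def Q_def)
  have "inverse (1 + (u / w)^2) = w^2 / Q"
    using nonzero by (simp add: Q_def field_simps)
  then show ?thesis
    unfolding sqrt_square_primitive_def using c s
    by (auto intro!: derivative_eq_intros) (simp add: eqs nonzero field_simps power2_eq_square)
qed

lemma sqrt_square_has_integral:
  assumes "a \<le> R" and c: "c > 0"
  shows "((\<lambda>s. (\<alpha> * sqrt (s - a) + \<gamma>) / (s - a + c)^2) has_integral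
           (sqrt_square_primitive \<alpha> \<gamma> a c R - sqrt_square_primitive \<alpha> \<gamma> a c a)) {a..R}"
proof (rule fundamental_theorem_of_calculus_interior[OF assms(1)])
  show "continuous_on {a..R} (sqrt_square_primitive \<alpha> \<gamma> a c)"
    unfolding sqrt_square_primitive_def using c
    by (intro continuous_intros) (auto simp: add_nonneg_pos)
qed (use sqrt_square_primitive_deriv[OF c] in \<open>auto simp: has_real_derivative_iff_has_vector_derivative\<close>)

lemma sqrt_square_primitive_increment_le:
  assumes "a \<le> R" "c > 0" "\<alpha> \<ge> 0" "\<gamma> \<ge> 0"
  shows "sqrt_square_primitive \<alpha> \<gamma> a c R - sqrt_square_primitive \<alpha> \<gamma> a c a
    \<le> \<alpha> * pi / (2 * sqrt c) + \<gamma> / c"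
proof -
  have "arctan (sqrt (R - a) / sqrt c) / sqrt c \<le> (pi / 2) / sqrt c"
    using arctan_ubound[of "sqrt (R - a) / sqrt c"] assms(2) by (intro divide_right_mono) auto
  moreover have "sqrt (R - a) / (R - a + c) \<ge> 0" using assms by auto
  ultimately have "\<alpha> * (arctan (sqrt (R - a) / sqrt c) / sqrt c - sqrt (R - a) / (R - a + c))
      \<le> \<alpha> * ((pi / 2) / sqrt c)"
    using assms(3) by (intro mult_left_mono) auto
  moreover have "\<gamma> / (R - a + c) \<ge> 0" using assms by auto
  ultimately show ?thesis by (simp add: sqrt_square_primitive_def)
qed

lemma has_integral_abs_le:
  fixes f g :: "real \<Rightarrow> real"
  assumes "(f has_integral i) S" "(g has_integral j) S" "\<And>x. x \<in> S \<Longrightarrow> \<bar>f x\<bar> \<le> g x"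
  shows "\<bar>i\<bar> \<le> j"
  using has_integral_norm_bound_integral_component[OF assms(1,2), of 1] assms(3) by simp

lemma linear_over_square_has_integral:
  fixes a t R :: real
  assumes "a \<le> R" and at: "a + t > 0"
  shows "((\<lambda>s. (s - a) * (- 1 / (s + t)^2)) has_integral
           ((R - a) / (R + t) - (ln (R + t) - ln (a + t)))) {a..R}"
proof -
  define F where "F s = - ln (s + t) - (a + t) / (s + t)" for s
  have "(F has_real_derivative (x - a) * (- 1 / (x + t)^2)) (at x)" if "x \<in> {a..R}" for x
  proof -
    have "- (1 / y) - (- a - t) / (y * y) = - ((y - t - a) / y^2)" if "y \<noteq> 0" for y
      using that by (simp add: field_simps power2_eq_square)
    moreover have "x + t > 0" using that at by simp
    ultimately show ?thesis
      unfolding F_def by (auto intro!: derivative_eq_intros)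
  qed
  then have "((\<lambda>s. (s - a) * (- 1 / (s + t)^2)) has_integral (F R - F a)) {a..R}"
    using assms(1) by (intro fundamental_theorem_of_calculus)
      (auto simp: has_real_derivative_iff_has_vector_derivative intro: has_vector_derivative_at_within)
  moreover have "F R - F a = (R - a) / (R + t) - (ln (R + t) - ln (a + t))"
    unfolding F_def using assms by (simp add: field_simps)
  ultimately show ?thesis by simp
qed

lemma abel_summation_has_integral:
  fixes v :: "'a \<Rightarrow> real" and H h :: "real \<Rightarrow> real"
  assumes fin: "finite P" and range: "\<And>p. p \<in> P \<Longrightarrow> a \<le> v p \<and> v p \<le> b"
    and deriv: "\<And>s. s \<in> {a..b} \<Longrightarrow> (H has_real_derivative h s) (at s)"
  shows "((\<lambda>s. real (card {p\<in>P. v p \<le> s}) * h s) has_integral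
           (real (card P) * H b - (\<Sum>p\<in>P. H (v p)))) {a..b}"
proof -
  have "((\<lambda>s. if s \<in> cbox (v p) b then h s else 0) has_integral (H b - H (v p))) (cbox a b)"
    if p: "p \<in> P" for p
  proof (rule has_integral_restrict_closed_subinterval)
    have "(h has_integral H b - H (v p)) {v p..b}"
      using range[OF p] deriv
      by (intro fundamental_theorem_of_calculus)
        (auto simp: has_real_derivative_iff_has_vector_derivative intro: has_vector_derivative_at_within)
    then show "(h has_integral H b - H (v p)) (cbox (v p) b)" by simp
    show "cbox (v p) b \<subseteq> cbox a b" using range[OF p] by auto
  qed
  then have sum_integral: "((\<lambda>s. \<Sum>p\<in>P. if s \<in> cbox (v p) b then h s else 0) has_integral
      (\<Sum>p\<in>P. H b - H (v p))) (cbox a b)"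
    by (intro has_integral_sum[OF fin])
  have "(\<Sum>p\<in>P. if s \<in> cbox (v p) b then h s else 0) = real (card {p\<in>P. v p \<le> s}) * h s"
    if "s \<in> cbox a b" for s
  proof -
    have "(\<Sum>p\<in>P. if s \<in> cbox (v p) b then h s else 0) = (\<Sum>p\<in>P. if v p \<le> s then h s else 0)"
      using that by (intro sum.cong refl) auto
    also have "\<dots> = (\<Sum>p\<in>{p\<in>P. v p \<le> s}. h s)"
      using sum.inter_filter[OF fin, of "\<lambda>_. h s" "\<lambda>p. v p \<le> s"] by simp
    finally show ?thesis by simp
  qed
  then have "((\<lambda>s. real (card {p\<in>P. v p \<le> s}) * h s) has_integral
      (\<Sum>p\<in>P. H b - H (v p))) (cbox a b)"
    using sum_integral by (subst has_integral_cong[symmetric])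
  then show ?thesis by (simp add: sum_subtractf)
qed

lemma reciprocal_sum_by_parts:
  fixes v :: "'a \<Rightarrow> real" and a R t \<rho> :: real
  assumes fin: "finite P" and range: "\<And>p. p \<in> P \<Longrightarrow> a \<le> v p \<and> v p \<le> R"
    and aR: "a \<le> R" and t: "a + t > 0"
  shows "((\<lambda>s. (\<rho> * (s - a) - real (card {p\<in>P. v p \<le> s})) / (s + t)^2) has_integral
           (real (card P) - \<rho> * (R - a)) / (R + t) + \<rho> * (ln (R + t) - ln (a + t))
           - (\<Sum>p\<in>P. 1 / (v p + t))) {a..R}"
proof -
  let ?N = "\<lambda>s. real (card {p\<in>P. v p \<le> s})"
  let ?w = "\<lambda>s. - 1 / (s + t)^2"
  have "((\<lambda>s. 1 / (s + t)) has_real_derivative ?w s) (at s)" if "s \<in> {a..R}" for s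
    using that t by (auto intro!: derivative_eq_intros simp: power2_eq_square)
  from abel_summation_has_integral[OF fin range this]
  have counting: "((\<lambda>s. ?N s * ?w s) has_integral
      (real (card P) * (1 / (R + t)) - (\<Sum>p\<in>P. 1 / (v p + t)))) {a..R}"
    by simp
  have main_term: "((\<lambda>s. (s - a) * ?w s * \<rho>) has_integral
      ((R - a) / (R + t) - (ln (R + t) - ln (a + t))) * \<rho>) {a..R}"
    by (intro has_integral_mult_left linear_over_square_has_integral aR t)
  have value_eq: "real (card P) * (1 / (R + t)) - (\<Sum>p\<in>P. 1 / (v p + t))
      - ((R - a) / (R + t) - (ln (R + t) - ln (a + t))) * \<rho>
      = (real (card P) - \<rho> * (R - a)) / (R + t) + \<rho> * (ln (R + t) - ln (a + t))
        - (\<Sum>p\<in>P. 1 / (v p + t))"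
    by (simp add: diff_divide_distrib add_divide_distrib algebra_simps)
  have integrand_eq: "(\<lambda>s. ?N s * ?w s - (s - a) * ?w s * \<rho>) = (\<lambda>s. (\<rho> * (s - a) - ?N s) / (s + t)^2)"
    by (simp add: diff_divide_distrib add_divide_distrib algebra_simps)
  from has_integral_diff[OF counting main_term] show ?thesis
    unfolding integrand_eq value_eq .
qed

lemma reciprocal_sum_counting_estimate:
  fixes v :: "'a \<Rightarrow> real" and a R t \<alpha> \<gamma> \<rho> :: real
  assumes fin: "finite P" and range: "\<And>p. p \<in> P \<Longrightarrow> a \<le> v p \<and> v p \<le> R"
    and aR: "a \<le> R" and t: "a + t > 0" and \<alpha>: "\<alpha> \<ge> 0" and \<gamma>: "\<gamma> \<ge> 0"
    and count: "\<And>s. s \<in> {a..R} \<Longrightarrow>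
      \<bar>real (card {p\<in>P. v p \<le> s}) - \<rho> * (s - a)\<bar> \<le> \<alpha> * sqrt (s - a) + \<gamma>"
  shows "\<bar>(real (card P) - \<rho> * (R - a)) / (R + t) + \<rho> * (ln (R + t) - ln (a + t))
           - (\<Sum>p\<in>P. 1 / (v p + t))\<bar>
         \<le> \<alpha> * pi / (2 * sqrt (a + t)) + \<gamma> / (a + t)"
proof -
  have "((\<lambda>s. (\<alpha> * sqrt (s - a) + \<gamma>) / (s + t)^2) has_integral
      (sqrt_square_primitive \<alpha> \<gamma> a (a + t) R - sqrt_square_primitive \<alpha> \<gamma> a (a + t) a)) {a..R}"
    using sqrt_square_has_integral[OF aR t] by simp
  moreover have "\<bar>(\<rho> * (s - a) - real (card {p\<in>P. v p \<le> s})) / (s + t)^2\<bar>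
      \<le> (\<alpha> * sqrt (s - a) + \<gamma>) / (s + t)^2" if "s \<in> {a..R}" for s
    using count[OF that] by (simp add: abs_minus_commute divide_right_mono)
  ultimately have "\<bar>(real (card P) - \<rho> * (R - a)) / (R + t) + \<rho> * (ln (R + t) - ln (a + t))
      - (\<Sum>p\<in>P. 1 / (v p + t))\<bar>
      \<le> sqrt_square_primitive \<alpha> \<gamma> a (a + t) R - sqrt_square_primitive \<alpha> \<gamma> a (a + t) a"
    by (intro has_integral_abs_le[OF reciprocal_sum_by_parts[OF fin range aR t]])
  also have "\<dots> \<le> \<alpha> * pi / (2 * sqrt (a + t)) + \<gamma> / (a + t)"
    by (rule sqrt_square_primitive_increment_le) (use aR t \<alpha> \<gamma> in auto)
  finally show ?thesis .
qed

lemma inverse_square_has_derivative: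
  fixes s :: real
  assumes "s > -1"
  shows "((\<lambda>s. 1 / (s + 1)^2) has_real_derivative - 2 / (s + 1)^3) (at s)"
proof -
  have "(- (2 * (y - 1)) - 2) / y ^ 4 = - (2 / y ^ 3)" if "y > 0" for y :: real
    using that by (simp add: field_simps eval_nat_numeral)
  from this[of "s + 1"] have "(- (2 * s) - 2) / (s + 1) ^ 4 = - (2 / (s + 1) ^ 3)"
    using assms by simp
  then show ?thesis
    using assms by (auto intro!: derivative_eq_intros)
qed

lemma inverse_square_sum_by_counting:
  fixes v :: "'a \<Rightarrow> real" and R K :: real
  assumes fin: "finite P" and range: "\<And>p. p \<in> P \<Longrightarrow> 0 \<le> v p \<and> v p \<le> R" and R: "R \<ge> 0"
    and K: "K \<ge> 0" and count: "\<And>s. s \<in> {0..R} \<Longrightarrow> real (card {p\<in>P. v p \<le> s}) \<le> K * (s + 1)"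
  shows "(\<Sum>p\<in>P. 1 / (v p + 1)^2) \<le> 3 * K"
proof -
  let ?N = "\<lambda>s. real (card {p\<in>P. v p \<le> s})"
  have "((\<lambda>s. 1 / (s + 1)^2) has_real_derivative - 2 / (s + 1)^3) (at s)" if "s \<in> {0..R}" for s
    using that by (intro inverse_square_has_derivative) auto
  from abel_summation_has_integral[OF fin range this]
  have "((\<lambda>s. ?N s * (- 2 / (s + 1)^3)) has_integral
      (real (card P) * (1 / (R + 1)^2) - (\<Sum>p\<in>P. 1 / (v p + 1)^2))) {0..R}" .
  moreover have "((\<lambda>s. 2 * K / (s + 1)^2) has_integral
      (sqrt_square_primitive 0 (2 * K) 0 1 R - sqrt_square_primitive 0 (2 * K) 0 1 0)) {0..R}"
    using sqrt_square_has_integral[of 0 R 1 0 "2 * K"] R by simp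
  moreover have "\<bar>?N s * (- 2 / (s + 1)^3)\<bar> \<le> 2 * K / (s + 1)^2" if s: "s \<in> {0..R}" for s
  proof -
    have "\<bar>?N s * (- 2 / (s + 1)^3)\<bar> = ?N s * (2 / (s + 1)^3)"
      using s by (simp add: abs_mult)
    also have "\<dots> \<le> K * (s + 1) * (2 / (s + 1)^3)"
      using count[OF s] s by (intro mult_right_mono) auto
    also have "\<dots> = 2 * K / (s + 1)^2"
    proof -
      have "K * y * (2 / y^3) = 2 * K / y^2" if "y > 0" for y :: real
        using that by (simp add: field_simps eval_nat_numeral)
      then show ?thesis using s by simp
    qed
    finally show ?thesis .
  qed
  ultimately have "\<bar>real (card P) * (1 / (R + 1)^2) - (\<Sum>p\<in>P. 1 / (v p + 1)^2)\<bar>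
      \<le> sqrt_square_primitive 0 (2 * K) 0 1 R - sqrt_square_primitive 0 (2 * K) 0 1 0"
    by (rule has_integral_abs_le)
  also have "\<dots> \<le> 2 * K"
    using sqrt_square_primitive_increment_le[of 0 R 1 0 "2 * K"] R K by simp
  finally have "(\<Sum>p\<in>P. 1 / (v p + 1)^2) \<le> real (card P) * (1 / (R + 1)^2) + 2 * K"
    by linarith
  moreover have "real (card P) * (1 / (R + 1)^2) \<le> K"
  proof -
    have "{p\<in>P. v p \<le> R} = P" using range by auto
    then have "real (card P) * (1 / (R + 1)^2) \<le> K * (R + 1) * (1 / (R + 1)^2)"
      using count[of R] R by (intro mult_right_mono) auto
    also have "\<dots> = K / (R + 1)" using R by (simp add: power2_eq_square)
    also have "\<dots> \<le> K / 1" using R K by (intro frac_le) auto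
    finally show ?thesis by simp
  qed
  ultimately show ?thesis by linarith
qed

section \<open>Points of the dual lattice\<close>

lemma lattice_sq_nonneg: "lattice_sq L p \<ge> 0"
  unfolding lattice_sq_def by simp

definition lattice_ball :: "real \<Rightarrow> real \<Rightarrow> (int \<times> int) set" where
  "lattice_ball L s = {p. lattice_sq L p \<le> s}"

lemma lattice_ball_eq_int_disc:
  fixes L s :: real
  assumes "L > 0"
  shows "lattice_ball L s = int_disc (s * (L / (2 * pi))^2)"
proof -
  have "(2 * pi / L)^2 * x \<le> s \<longleftrightarrow> x \<le> s * (L / (2 * pi))^2" for x
    using assms by (simp add: field_simps)
  then show ?thesis unfolding lattice_ball_def int_disc_def lattice_sq_def by simp
qed

lemma finite_lattice_ball: "L > 0 \<Longrightarrow> finite (lattice_ball L s)"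
  by (simp add: lattice_ball_eq_int_disc finite_int_disc)

definition lattice_count_error :: "real \<Rightarrow> real \<Rightarrow> real" where
  "lattice_count_error L s = real (card (lattice_ball L s)) - L^2 / (4 * pi) * s"

lemma lattice_count_error_bound:
  fixes L s :: real
  assumes "L > 0" "s \<ge> 0"
  shows "\<bar>lattice_count_error L s\<bar> \<le> 2 * L / pi * sqrt s + 1"
proof -
  have "\<bar>real (card (lattice_ball L s)) - pi * (s * (L / (2 * pi))^2)\<bar>
      \<le> 4 * sqrt (s * (L / (2 * pi))^2) + 1"
    unfolding lattice_ball_eq_int_disc[OF assms(1)] using assms by (intro gauss_circle_bound) simp
  moreover have "pi * (s * (L / (2 * pi))^2) = L^2 / (4 * pi) * s"
    by (simp add: power2_eq_square)
  moreover have "4 * sqrt (s * (L / (2 * pi))^2) = 2 * L / pi * sqrt s"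
    using assms by (simp add: real_sqrt_mult)
  ultimately show ?thesis unfolding lattice_count_error_def by simp
qed

lemma lattice_ball_reciprocal_sum:
  fixes L R :: real
  assumes L: "L > 0" and R: "R \<ge> 0"
  shows "\<bar>lattice_count_error L R / (R + 1) + L^2 / (4 * pi) * ln (R + 1)
           - (\<Sum>p\<in>lattice_ball L R. 1 / (lattice_sq L p + 1))\<bar> \<le> L + 1"
proof -
  have "\<bar>(real (card (lattice_ball L R)) - L^2 / (4 * pi) * (R - 0)) / (R + 1)
      + L^2 / (4 * pi) * (ln (R + 1) - ln (0 + 1))
      - (\<Sum>p\<in>lattice_ball L R. 1 / (lattice_sq L p + 1))\<bar>
      \<le> 2 * L / pi * pi / (2 * sqrt (0 + 1)) + 1 / (0 + 1)"
  proof (rule reciprocal_sum_counting_estimate)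
    fix s assume s: "s \<in> {0..R}"
    then have "{p \<in> lattice_ball L R. lattice_sq L p \<le> s} = lattice_ball L s"
      by (auto simp: lattice_ball_def)
    then show "\<bar>real (card {p \<in> lattice_ball L R. lattice_sq L p \<le> s}) - L^2 / (4 * pi) * (s - 0)\<bar>
        \<le> 2 * L / pi * sqrt (s - 0) + 1"
      using lattice_count_error_bound[OF L, of s] s by (simp add: lattice_count_error_def)
  qed (use L R lattice_sq_nonneg finite_lattice_ball in \<open>auto simp: lattice_ball_def\<close>)
  then show ?thesis using L by (simp add: lattice_count_error_def)
qed

lemma lattice_count_error_increment_bound:
  fixes L \<mu> s :: real
  assumes L: "L > 0" and \<mu>: "\<mu> > 0" and s: "\<mu> \<le> s"
  shows "\<bar>lattice_count_error L s - lattice_count_error L \<mu>\<bar>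
    \<le> 2 * L / pi * sqrt (s - \<mu>) + (4 * L * sqrt \<mu> / pi + 2)"
proof -
  have "\<bar>lattice_count_error L s - lattice_count_error L \<mu>\<bar>
      \<le> (2 * L / pi * sqrt s + 1) + (2 * L / pi * sqrt \<mu> + 1)"
    using lattice_count_error_bound[OF L, of s] lattice_count_error_bound[OF L, of \<mu>] s \<mu>
    by (intro abs_triangle_ineq4[THEN order_trans] add_mono) auto
  also have "\<dots> \<le> 2 * L / pi * sqrt (s - \<mu>) + (4 * L * sqrt \<mu> / pi + 2)"
  proof -
    have "2 * L / pi * sqrt s \<le> 2 * L / pi * (sqrt (s - \<mu>) + sqrt \<mu>)"
      using sqrt_add_le_add_sqrt[of "s - \<mu>" \<mu>] s \<mu> L by (intro mult_left_mono) auto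
    moreover have "4 * L * sqrt \<mu> / pi = 2 * (2 * L / pi * sqrt \<mu>)" by simp
    ultimately show ?thesis by (simp only: distrib_left)
  qed
  finally show ?thesis .
qed

lemma lattice_shell_reciprocal_sum:
  fixes L \<mu> \<tau> R :: real
  assumes L: "L > 0" and \<mu>: "\<mu> > 0" and c: "\<mu> + \<tau> > 0" and R: "\<mu> \<le> R"
  shows "\<bar>(lattice_count_error L R - lattice_count_error L \<mu>) / (R + \<tau>)
           + L^2 / (4 * pi) * (ln (R + \<tau>) - ln (\<mu> + \<tau>))
           - (\<Sum>p\<in>{p\<in>lattice_ball L R. \<mu> < lattice_sq L p}. 1 / (lattice_sq L p + \<tau>))\<bar>
         \<le> L / sqrt (\<mu> + \<tau>) + (4 * L * sqrt \<mu> / pi + 2) / (\<mu> + \<tau>)"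
proof -
  let ?shell = "{p\<in>lattice_ball L R. \<mu> < lattice_sq L p}"
  have shell_count: "real (card {p\<in>?shell. lattice_sq L p \<le> s}) - L^2 / (4 * pi) * (s - \<mu>)
      = lattice_count_error L s - lattice_count_error L \<mu>" if "s \<in> {\<mu>..R}" for s
  proof -
    have "{p\<in>?shell. lattice_sq L p \<le> s} = lattice_ball L s - lattice_ball L \<mu>"
      "lattice_ball L \<mu> \<subseteq> lattice_ball L s"
      using that by (auto simp: lattice_ball_def)
    then show ?thesis
      by (simp add: card_Diff_subset card_mono finite_lattice_ball[OF L]
          lattice_count_error_def right_diff_distrib)
  qed
  have "\<bar>(real (card ?shell) - L^2 / (4 * pi) * (R - \<mu>)) / (R + \<tau>)
      + L^2 / (4 * pi) * (ln (R + \<tau>) - ln (\<mu> + \<tau>))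
      - (\<Sum>p\<in>?shell. 1 / (lattice_sq L p + \<tau>))\<bar>
      \<le> 2 * L / pi * pi / (2 * sqrt (\<mu> + \<tau>)) + (4 * L * sqrt \<mu> / pi + 2) / (\<mu> + \<tau>)"
    using shell_count lattice_count_error_increment_bound[OF L \<mu>]
    by (intro reciprocal_sum_counting_estimate) (use L \<mu> c R finite_lattice_ball in \<open>auto simp: lattice_ball_def\<close>)
  moreover have "{p\<in>?shell. lattice_sq L p \<le> R} = ?shell" by (auto simp: lattice_ball_def)
  ultimately show ?thesis using shell_count[of R] L R by simp
qed

section \<open>The truncated lattice sum\<close>

lemma boundary_terms_bound:
  fixes D\<^sub>R D\<^sub>\<mu> B\<^sub>R B\<^sub>\<mu> R \<tau> :: real
  assumes "R + 1 > 0" "R + \<tau> > 0" "\<bar>D\<^sub>R\<bar> \<le> B\<^sub>R" "\<bar>D\<^sub>\<mu>\<bar> \<le> B\<^sub>\<mu>"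
  shows "\<bar>D\<^sub>R / (R + 1) - (D\<^sub>R - D\<^sub>\<mu>) / (R + \<tau>)\<bar>
    \<le> B\<^sub>R * \<bar>\<tau> - 1\<bar> / ((R + 1) * (R + \<tau>)) + B\<^sub>\<mu> / (R + \<tau>)"
proof -
  have "1 / (R + 1) - 1 / (R + \<tau>) = (\<tau> - 1) / ((R + 1) * (R + \<tau>))"
    using diff_frac_eq[of "R + 1" "R + \<tau>" 1 1] assms(1,2) by simp
  moreover have "D\<^sub>R / (R + 1) - (D\<^sub>R - D\<^sub>\<mu>) / (R + \<tau>)
      = D\<^sub>R * (1 / (R + 1) - 1 / (R + \<tau>)) + D\<^sub>\<mu> / (R + \<tau>)"
    by (simp add: diff_divide_distrib right_diff_distrib)
  ultimately have "D\<^sub>R / (R + 1) - (D\<^sub>R - D\<^sub>\<mu>) / (R + \<tau>)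
      = D\<^sub>R * (\<tau> - 1) / ((R + 1) * (R + \<tau>)) + D\<^sub>\<mu> / (R + \<tau>)"
    by simp
  also have "\<bar>\<dots>\<bar> \<le> \<bar>D\<^sub>R\<bar> * \<bar>\<tau> - 1\<bar> / ((R + 1) * (R + \<tau>)) + \<bar>D\<^sub>\<mu>\<bar> / (R + \<tau>)"
    using assms(1,2) by (simp add: abs_mult abs_triangle_ineq[THEN order_trans])
  also have "\<dots> \<le> B\<^sub>R * \<bar>\<tau> - 1\<bar> / ((R + 1) * (R + \<tau>)) + B\<^sub>\<mu> / (R + \<tau>)"
    using assms by (intro add_mono divide_right_mono mult_right_mono) auto
  finally show ?thesis .
qed

lemma remainders_le_K_const:
  fixes L \<mu> \<tau> I\<^sub>1 I\<^sub>2 :: real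
  assumes L: "L > 0" and \<mu>: "\<mu> > 0" and \<tau>: "\<tau> > - \<mu>"
    and I\<^sub>1: "\<bar>I\<^sub>1\<bar> \<le> L + 1"
    and I\<^sub>2: "\<bar>I\<^sub>2\<bar> \<le> L / sqrt (\<mu> + \<tau>) + (4 * L * sqrt \<mu> / pi + 2) / (\<mu> + \<tau>)"
  shows "(\<bar>I\<^sub>1\<bar> + \<bar>I\<^sub>2\<bar>) / L^2 \<le> K_const \<tau> \<mu> L / L"
proof -
  define m where "m = \<mu> + min \<tau> 1"
  define c where "c = \<mu> + \<tau>"
  have m: "m > 0" "m \<le> c" unfolding m_def c_def using \<mu> \<tau> by (auto simp: min_def)
  then have inv: "1 / sqrt c \<le> 1 / sqrt m" "1 / c \<le> 1 / m" by (auto simp: frac_le)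
  have "(\<bar>I\<^sub>1\<bar> + \<bar>I\<^sub>2\<bar>) / L^2 \<le> (L + 1 + L / sqrt c + (4 * L * sqrt \<mu> / pi + 2) / c) / L^2"
    using I\<^sub>1 I\<^sub>2 unfolding c_def by (intro divide_right_mono) auto
  also have "\<dots> = 1 / L + 1 / L^2 + (1 / L) * (1 / sqrt c) + (4 * sqrt \<mu> / pi / L) * (1 / c)
        + (2 / L^2) * (1 / c)"
    using L m by (simp add: field_simps power2_eq_square)
  also have "\<dots> \<le> 1 / L + 3 / L^2 + (1 / L) * (1 / sqrt m) + (4 * sqrt \<mu> / pi / L) * (1 / m)
        + (6 / L^2) * (1 / m)"
  proof -
    have "(1 / L) * (1 / sqrt c) \<le> (1 / L) * (1 / sqrt m)"
      using inv(1) by (rule mult_left_mono) (use L in simp)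
    moreover have "(4 * sqrt \<mu> / pi / L) * (1 / c) \<le> (4 * sqrt \<mu> / pi / L) * (1 / m)"
      using inv(2) by (rule mult_left_mono) (use L \<mu> in simp)
    moreover have "(2 / L^2) * (1 / c) \<le> (2 / L^2) * (1 / m)"
      using inv(2) by (rule mult_left_mono) (use L in simp)
    moreover have "(2 / L^2) * (1 / m) \<le> (6 / L^2) * (1 / m)" "1 / L^2 \<le> 3 / L^2"
      using L m by (auto intro!: mult_right_mono divide_right_mono)
    ultimately show ?thesis by linarith
  qed
  also have "\<dots> = K_const \<tau> \<mu> L / L"
    unfolding K_const_def m_def[symmetric] using L m by (simp add: field_simps power2_eq_square)
  finally show ?thesis .
qed

definition G_summand :: "real \<Rightarrow> real \<Rightarrow> real \<Rightarrow> real \<Rightarrow> int \<times> int \<Rightarrow> real" where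
  "G_summand L E_B \<mu> \<tau> p =
     1 / (lattice_sq L p - E_B) - (if \<mu> < lattice_sq L p then 1 / (lattice_sq L p + \<tau>) else 0)"

definition truncation_error :: "real \<Rightarrow> real \<Rightarrow> real \<Rightarrow> real \<Rightarrow> real" where
  "truncation_error L \<mu> \<tau> R =
     ((2 * L / pi * sqrt R + 1) * \<bar>\<tau> - 1\<bar> / ((R + 1) * (R + \<tau>))
       + (2 * L / pi * sqrt \<mu> + 1) / (R + \<tau>)) / L^2
     + \<bar>ln (R + 1) - ln (R + \<tau>)\<bar> / (4 * pi)"

lemma truncated_G_sum_estimate:
  fixes L \<mu> \<tau> R :: real
  assumes L: "L > 0" and \<mu>: "\<mu> > 0" and \<tau>: "\<tau> > - \<mu>" and R: "\<mu> \<le> R"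
  shows "\<bar>(\<Sum>p\<in>lattice_ball L R. G_summand L (-1) \<mu> \<tau> p) / L^2 - ln (\<mu> + \<tau>) / (4 * pi)\<bar>
    \<le> K_const \<tau> \<mu> L / L + truncation_error L \<mu> \<tau> R"
proof -
  define E where "E = lattice_count_error L"
  define S\<^sub>1 where "S\<^sub>1 = (\<Sum>p\<in>lattice_ball L R. 1 / (lattice_sq L p + 1))"
  define S\<^sub>2 where "S\<^sub>2 = (\<Sum>p\<in>{p\<in>lattice_ball L R. \<mu> < lattice_sq L p}. 1 / (lattice_sq L p + \<tau>))"
  define I\<^sub>1 where "I\<^sub>1 = E R / (R + 1) + L^2 / (4 * pi) * ln (R + 1) - S\<^sub>1"
  define I\<^sub>2 where "I\<^sub>2 = (E R - E \<mu>) / (R + \<tau>) + L^2 / (4 * pi) * (ln (R + \<tau>) - ln (\<mu> + \<tau>)) - S\<^sub>2"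
  have R0: "R \<ge> 0" and c: "\<mu> + \<tau> > 0" and R\<tau>: "R + \<tau> > 0" using \<mu> \<tau> R by auto
  have "(\<Sum>p\<in>lattice_ball L R. G_summand L (-1) \<mu> \<tau> p) = S\<^sub>1 - S\<^sub>2"
    unfolding G_summand_def S\<^sub>1_def S\<^sub>2_def
    using finite_lattice_ball[OF L] by (simp add: sum_subtractf sum.inter_filter)
  also have "\<dots> = (E R / (R + 1) - (E R - E \<mu>) / (R + \<tau>) - I\<^sub>1 + I\<^sub>2)
      + L^2 / (4 * pi) * (ln (R + 1) - ln (R + \<tau>) + ln (\<mu> + \<tau>))"
    unfolding I\<^sub>1_def I\<^sub>2_def by (simp add: algebra_simps add_divide_distrib diff_divide_distrib)
  finally have "(\<Sum>p\<in>lattice_ball L R. G_summand L (-1) \<mu> \<tau> p) / L^2 - ln (\<mu> + \<tau>) / (4 * pi)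
      = (E R / (R + 1) - (E R - E \<mu>) / (R + \<tau>) - I\<^sub>1 + I\<^sub>2) / L^2
        + (ln (R + 1) - ln (R + \<tau>)) / (4 * pi)"
    using L by (simp add: field_simps)
  also have "\<bar>\<dots>\<bar> \<le> (\<bar>E R / (R + 1) - (E R - E \<mu>) / (R + \<tau>)\<bar> + (\<bar>I\<^sub>1\<bar> + \<bar>I\<^sub>2\<bar>)) / L^2
        + \<bar>ln (R + 1) - ln (R + \<tau>)\<bar> / (4 * pi)"
  proof (intro abs_triangle_ineq[THEN order_trans] add_mono)
    have "\<bar>E R / (R + 1) - (E R - E \<mu>) / (R + \<tau>) - I\<^sub>1 + I\<^sub>2\<bar>
        \<le> \<bar>E R / (R + 1) - (E R - E \<mu>) / (R + \<tau>)\<bar> + (\<bar>I\<^sub>1\<bar> + \<bar>I\<^sub>2\<bar>)"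
      by arith
    then show "\<bar>(E R / (R + 1) - (E R - E \<mu>) / (R + \<tau>) - I\<^sub>1 + I\<^sub>2) / L^2\<bar>
        \<le> (\<bar>E R / (R + 1) - (E R - E \<mu>) / (R + \<tau>)\<bar> + (\<bar>I\<^sub>1\<bar> + \<bar>I\<^sub>2\<bar>)) / L^2"
      by (simp add: divide_right_mono)
  qed simp
  also have "\<dots> \<le> ((2 * L / pi * sqrt R + 1) * \<bar>\<tau> - 1\<bar> / ((R + 1) * (R + \<tau>))
        + (2 * L / pi * sqrt \<mu> + 1) / (R + \<tau>) + (\<bar>I\<^sub>1\<bar> + \<bar>I\<^sub>2\<bar>)) / L^2
        + \<bar>ln (R + 1) - ln (R + \<tau>)\<bar> / (4 * pi)"
    unfolding E_def using lattice_count_error_bound[OF L] R0 \<mu> R\<tau> L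
    by (intro add_mono divide_right_mono order_refl boundary_terms_bound) auto
  finally have "\<bar>(\<Sum>p\<in>lattice_ball L R. G_summand L (-1) \<mu> \<tau> p) / L^2 - ln (\<mu> + \<tau>) / (4 * pi)\<bar>
    \<le> ((2 * L / pi * sqrt R + 1) * \<bar>\<tau> - 1\<bar> / ((R + 1) * (R + \<tau>))
        + (2 * L / pi * sqrt \<mu> + 1) / (R + \<tau>) + (\<bar>I\<^sub>1\<bar> + \<bar>I\<^sub>2\<bar>)) / L^2
        + \<bar>ln (R + 1) - ln (R + \<tau>)\<bar> / (4 * pi)" .
  moreover have "(\<bar>I\<^sub>1\<bar> + \<bar>I\<^sub>2\<bar>) / L^2 \<le> K_const \<tau> \<mu> L / L"
    using lattice_ball_reciprocal_sum[OF L R0] lattice_shell_reciprocal_sum[OF L \<mu> c R]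
    unfolding I\<^sub>1_def I\<^sub>2_def S\<^sub>1_def S\<^sub>2_def E_def by (intro remainders_le_K_const[OF L \<mu> \<tau>])
  ultimately show ?thesis by (simp add: truncation_error_def add_divide_distrib)
qed

section \<open>Passing to the infinite sum\<close>

lemma reciprocal_difference_bound:
  fixes s \<mu> \<tau> :: real
  assumes s: "s \<ge> 0" and \<mu>: "\<mu> > 0" and \<tau>: "\<tau> > - \<mu>"
  shows "\<bar>1 / (s + 1) - (if \<mu> < s then 1 / (s + \<tau>) else 0)\<bar>
    \<le> (\<mu> + 1 + \<bar>\<tau> - 1\<bar> * (1 + (\<mu> + 1) / (\<mu> + \<tau>))) / (s + 1)^2"
proof -
  define A where "A = 1 + (\<mu> + 1) / (\<mu> + \<tau>)"
  have A: "A \<ge> 1" unfolding A_def using \<mu> \<tau> by simp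
  have s1: "s + 1 > 0" using s by simp
  have "\<bar>\<tau> - 1\<bar> * A \<ge> 0" using A by simp
  show ?thesis
  proof (cases "\<mu> < s")
    case False
    then have "\<bar>1 / (s + 1) - (if \<mu> < s then 1 / (s + \<tau>) else 0)\<bar> = (s + 1) / (s + 1)^2"
      using s1 by (simp add: power2_eq_square)
    also have "\<dots> \<le> (\<mu> + 1 + \<bar>\<tau> - 1\<bar> * A) / (s + 1)^2"
      using False \<open>\<bar>\<tau> - 1\<bar> * A \<ge> 0\<close> by (intro divide_right_mono) auto
    finally show ?thesis unfolding A_def .
  next
    case True
    have s\<tau>: "s + \<tau> > 0" using True \<tau> by simp
    have "1 / (s + \<tau>) \<le> A / (s + 1)"
    proof -
      have "(\<mu> + 1) / (\<mu> + \<tau>) * (s + \<tau>) \<ge> (\<mu> + 1) / (\<mu> + \<tau>) * (\<mu> + \<tau>)"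
        using True \<mu> \<tau> by (intro mult_left_mono) auto
      then have "(\<mu> + 1) / (\<mu> + \<tau>) * (s + \<tau>) \<ge> \<mu> + 1" using \<tau> by simp
      moreover have "A * (s + \<tau>) = (s + \<tau>) + (\<mu> + 1) / (\<mu> + \<tau>) * (s + \<tau>)"
        unfolding A_def by (simp add: algebra_simps)
      ultimately have "A * (s + \<tau>) \<ge> s + 1" using \<tau> by linarith
      then show ?thesis using s1 s\<tau> by (simp add: divide_simps)
    qed
    have "1 / (s + 1) - 1 / (s + \<tau>) = (\<tau> - 1) / ((s + 1) * (s + \<tau>))"
      using diff_frac_eq[of "s + 1" "s + \<tau>" 1 1] s1 s\<tau> by simp
    then have "\<bar>1 / (s + 1) - (if \<mu> < s then 1 / (s + \<tau>) else 0)\<bar>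
        = \<bar>\<tau> - 1\<bar> * (1 / (s + 1) * (1 / (s + \<tau>)))"
      using True s1 s\<tau> by (simp add: abs_mult)
    also have "\<dots> \<le> \<bar>\<tau> - 1\<bar> * (1 / (s + 1) * (A / (s + 1)))"
      using \<open>1 / (s + \<tau>) \<le> A / (s + 1)\<close> s1 by (intro mult_left_mono) auto
    also have "\<dots> \<le> (\<mu> + 1 + \<bar>\<tau> - 1\<bar> * A) / (s + 1)^2"
      using \<mu> by (simp add: power2_eq_square divide_right_mono)
    finally show ?thesis unfolding A_def .
  qed
qed

lemma card_lattice_ball_le_linear:
  fixes L s :: real
  assumes L: "L > 0" and s: "s \<ge> 0"
  shows "real (card (lattice_ball L s)) \<le> (L^2 / (4 * pi) + 2 * L / pi + 1) * (s + 1)"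
proof -
  have "s \<le> (s + 1)^2" using s by (simp add: power2_eq_square algebra_simps)
  then have "sqrt s \<le> s + 1" using s by (intro real_le_lsqrt) auto
  then have "2 * L / pi * sqrt s \<le> 2 * L / pi * (s + 1)"
    using L by (intro mult_left_mono) auto
  moreover have "real (card (lattice_ball L s)) \<le> L^2 / (4 * pi) * s + 2 * L / pi * sqrt s + 1"
    using lattice_count_error_bound[OF L s] unfolding lattice_count_error_def by linarith
  moreover have "L^2 / (4 * pi) * s \<le> L^2 / (4 * pi) * (s + 1)" by (rule mult_left_mono) auto
  ultimately show ?thesis using s by (simp add: algebra_simps)
qed

lemma lattice_ball_inverse_square_sum_le:
  fixes L R :: real
  assumes L: "L > 0" and R: "R \<ge> 0"
  shows "(\<Sum>p\<in>lattice_ball L R. 1 / (lattice_sq L p + 1)^2) \<le> 3 * (L^2 / (4 * pi) + 2 * L / pi + 1)"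
proof (rule inverse_square_sum_by_counting[OF finite_lattice_ball[OF L] _ R])
  fix s assume "s \<in> {0..R}"
  then have "{p\<in>lattice_ball L R. lattice_sq L p \<le> s} = lattice_ball L s"
    by (auto simp: lattice_ball_def)
  then show "real (card {p\<in>lattice_ball L R. lattice_sq L p \<le> s})
      \<le> (L^2 / (4 * pi) + 2 * L / pi + 1) * (s + 1)"
    using card_lattice_ball_le_linear[OF L] \<open>s \<in> {0..R}\<close> by simp
qed (use L lattice_sq_nonneg in \<open>auto simp: lattice_ball_def\<close>)

lemma G_summand_summable:
  fixes L \<mu> \<tau> :: real
  assumes L: "L > 0" and \<mu>: "\<mu> > 0" and \<tau>: "\<tau> > - \<mu>"
  shows "G_summand L (-1) \<mu> \<tau> summable_on UNIV"
proof -
  define C where "C = \<mu> + 1 + \<bar>\<tau> - 1\<bar> * (1 + (\<mu> + 1) / (\<mu> + \<tau>))"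
  have C: "C \<ge> 0" unfolding C_def using \<mu> \<tau> by simp
  have bound: "norm (G_summand L (-1) \<mu> \<tau> p) \<le> C * (1 / (lattice_sq L p + 1)^2)" for p
    using reciprocal_difference_bound[OF lattice_sq_nonneg \<mu> \<tau>, of L p]
    unfolding G_summand_def C_def by simp
  have "(\<lambda>p. norm (G_summand L (-1) \<mu> \<tau> p)) summable_on UNIV"
  proof (rule nonneg_bdd_above_summable_on)
    show "bdd_above (sum (\<lambda>p. norm (G_summand L (-1) \<mu> \<tau> p)) ` {F. F \<subseteq> UNIV \<and> finite F})"
    proof (rule bdd_aboveI2)
      fix F :: "(int \<times> int) set" assume "F \<in> {F. F \<subseteq> UNIV \<and> finite F}"
      then have F: "finite F" by simp
      define R where "R = (\<Sum>p\<in>F. lattice_sq L p)"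
      have R: "R \<ge> 0" unfolding R_def by (simp add: sum_nonneg lattice_sq_nonneg)
      have "F \<subseteq> lattice_ball L R"
        unfolding lattice_ball_def R_def using F lattice_sq_nonneg by (auto intro: member_le_sum)
      then have "(\<Sum>p\<in>F. 1 / (lattice_sq L p + 1)^2) \<le> (\<Sum>p\<in>lattice_ball L R. 1 / (lattice_sq L p + 1)^2)"
        by (intro sum_mono2 finite_lattice_ball[OF L]) auto
      also have "\<dots> \<le> 3 * (L^2 / (4 * pi) + 2 * L / pi + 1)"
        by (rule lattice_ball_inverse_square_sum_le[OF L R])
      finally have "C * (\<Sum>p\<in>F. 1 / (lattice_sq L p + 1)^2) \<le> C * (3 * (L^2 / (4 * pi) + 2 * L / pi + 1))"
        using C by (rule mult_left_mono)
      moreover have "(\<Sum>p\<in>F. norm (G_summand L (-1) \<mu> \<tau> p)) \<le> C * (\<Sum>p\<in>F. 1 / (lattice_sq L p + 1)^2)"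
        unfolding sum_distrib_left by (intro sum_mono bound)
      ultimately show "(\<Sum>p\<in>F. norm (G_summand L (-1) \<mu> \<tau> p)) \<le> C * (3 * (L^2 / (4 * pi) + 2 * L / pi + 1))"
        by linarith
    qed
  qed simp
  then show ?thesis by (rule abs_summable_summable)
qed

lemma lattice_balls_exhaust:
  assumes "L > 0"
  shows "filterlim (lattice_ball L) (finite_subsets_at_top UNIV) at_top"
  unfolding filterlim_finite_subsets_at_top
proof (intro allI impI)
  fix X :: "(int \<times> int) set" assume X: "finite X \<and> X \<subseteq> UNIV"
  show "\<forall>\<^sub>F R in at_top. finite (lattice_ball L R) \<and> X \<subseteq> lattice_ball L R \<and> lattice_ball L R \<subseteq> UNIV"
  proof (rule eventually_at_top_linorderI[of "\<Sum>p\<in>X. lattice_sq L p"])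
    fix R assume "R \<ge> (\<Sum>p\<in>X. lattice_sq L p)"
    moreover have "lattice_sq L p \<le> (\<Sum>p\<in>X. lattice_sq L p)" if "p \<in> X" for p
      using X that lattice_sq_nonneg by (intro member_le_sum) auto
    ultimately show "finite (lattice_ball L R) \<and> X \<subseteq> lattice_ball L R \<and> lattice_ball L R \<subseteq> UNIV"
      using finite_lattice_ball[OF assms] by (force simp: lattice_ball_def)
  qed
qed

lemma truncation_error_tendsto_zero: "(truncation_error L \<mu> \<tau> \<longlongrightarrow> 0) at_top"
proof -
  have "((\<lambda>R. (2 * L / pi * sqrt R + 1) * \<bar>\<tau> - 1\<bar> / ((R + 1) * (R + \<tau>))) \<longlongrightarrow> 0) at_top"
    "((\<lambda>R. (2 * L / pi * sqrt \<mu> + 1) / (R + \<tau>)) \<longlongrightarrow> 0) at_top"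
    "((\<lambda>R. ln (R + 1) - ln (R + \<tau>)) \<longlongrightarrow> 0) at_top"
    by real_asymp+
  then show ?thesis
    unfolding truncation_error_def[abs_def]
    by (intro tendsto_add_zero tendsto_divide_zero tendsto_rabs_zero)
qed

lemma G_mu_eq_infsum: "G_mu L E_B \<mu> \<tau> = (\<Sum>\<^sub>\<infinity>p. G_summand L E_B \<mu> \<tau> p) / L^2"
  unfolding G_mu_def G_summand_def by simp

lemma G_mu_unit_binding_estimate:
  fixes L \<mu> \<tau> :: real
  assumes L: "L > 0" and \<mu>: "\<mu> > 0" and \<tau>: "\<tau> > - \<mu>"
  shows "\<bar>G_mu L (-1) \<mu> \<tau> - (1 / (4 * pi)) * ln (\<mu> + \<tau>)\<bar> \<le> K_const \<tau> \<mu> L / L"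
proof -
  let ?f = "G_summand L (-1) \<mu> \<tau>"
  let ?err = "\<lambda>S. \<bar>S / L^2 - ln (\<mu> + \<tau>) / (4 * pi)\<bar>"
  have "(?f has_sum (\<Sum>\<^sub>\<infinity>p. ?f p)) UNIV"
    using G_summand_summable[OF L \<mu> \<tau>] by (rule has_sum_infsum)
  then have "((\<lambda>R. sum ?f (lattice_ball L R)) \<longlongrightarrow> (\<Sum>\<^sub>\<infinity>p. ?f p)) at_top"
    unfolding has_sum_def using lattice_balls_exhaust[OF L] by (rule filterlim_compose)
  then have lower: "((\<lambda>R. ?err (sum ?f (lattice_ball L R))) \<longlongrightarrow> ?err (\<Sum>\<^sub>\<infinity>p. ?f p)) at_top"
    using L by (intro tendsto_intros) auto
  have upper: "((\<lambda>R. K_const \<tau> \<mu> L / L + truncation_error L \<mu> \<tau> R) \<longlongrightarrow> K_const \<tau> \<mu> L / L + 0) at_top"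
    by (intro tendsto_intros truncation_error_tendsto_zero)
  have "\<forall>\<^sub>F R in at_top. ?err (sum ?f (lattice_ball L R)) \<le> K_const \<tau> \<mu> L / L + truncation_error L \<mu> \<tau> R"
    using eventually_ge_at_top[of \<mu>] by eventually_elim (rule truncated_G_sum_estimate[OF L \<mu> \<tau>])
  with upper lower have "?err (\<Sum>\<^sub>\<infinity>p. ?f p) \<le> K_const \<tau> \<mu> L / L + 0"
    by (rule tendsto_le[OF trivial_limit_at_top_linorder])
  then show ?thesis by (simp add: G_mu_eq_infsum)
qed

lemma G_mu_rescale:
  fixes E_B L \<mu> \<tau> :: real
  assumes E_B: "E_B < 0" and L: "L > 0"
  shows "G_mu L E_B \<mu> \<tau> = G_mu (L * sqrt \<bar>E_B\<bar>) (-1) (\<mu> / \<bar>E_B\<bar>) (\<tau> / \<bar>E_B\<bar>)"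
proof -
  define E where "E = \<bar>E_B\<bar>"
  define L' where "L' = L * sqrt E"
  have E: "E > 0" "E_B = - E" unfolding E_def using E_B by auto
  have sq: "lattice_sq L p = E * lattice_sq L' p" for p
    unfolding lattice_sq_def L'_def using E L by (simp add: field_simps)
  have summand: "G_summand L E_B \<mu> \<tau> p = 1 / E * G_summand L' (-1) (\<mu> / E) (\<tau> / E) p" for p
  proof -
    define q where "q = lattice_sq L' p"
    have "\<mu> < E * q \<longleftrightarrow> \<mu> / E < q" using E by (simp add: pos_divide_less_eq mult.commute)
    moreover have "E * q - E_B = E * (q - -1)" "E * q + \<tau> = E * (q + \<tau> / E)"
      using E by (simp_all add: algebra_simps)
    ultimately show ?thesis
      unfolding G_summand_def sq q_def[symmetric] by (simp add: right_diff_distrib)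
  qed
  have "G_mu L E_B \<mu> \<tau> = (\<Sum>\<^sub>\<infinity>p. G_summand L' (-1) (\<mu> / E) (\<tau> / E) p) / (E * L^2)"
    unfolding G_mu_eq_infsum summand infsum_cmult_right' by simp
  also have "E * L^2 = L'^2" unfolding L'_def using E by (simp add: power_mult_distrib)
  finally show ?thesis by (simp add: G_mu_eq_infsum L'_def E_def)
qed

theorem lemma5p2:
  fixes E_B \<mu> \<tau> L :: real
  assumes "E_B < 0" and "\<mu> > 0" and "\<tau> > - \<mu>" and "L > 0"
  shows "\<bar>G_mu L E_B \<mu> \<tau> - (1 / (4 * pi)) * ln (\<mu> / \<bar>E_B\<bar> + \<tau> / \<bar>E_B\<bar>)\<bar>
         \<le> K_const (\<tau> / \<bar>E_B\<bar>) (\<mu> / \<bar>E_B\<bar>) (L * sqrt \<bar>E_B\<bar>) / (L * sqrt \<bar>E_B\<bar>)"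
proof -
  have E: "\<bar>E_B\<bar> > 0" using assms(1) by simp
  have "L * sqrt \<bar>E_B\<bar> > 0" "\<mu> / \<bar>E_B\<bar> > 0" using assms(2,4) E by simp_all
  moreover have "\<tau> / \<bar>E_B\<bar> > - (\<mu> / \<bar>E_B\<bar>)"
    using divide_strict_right_mono[OF assms(3) E] by simp
  ultimately show ?thesis
    unfolding G_mu_rescale[OF assms(1,4)] by (rule G_mu_unit_binding_estimate)
qed

end
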